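(* Let $G$ be a tree with vertices $1,2,\ldots,n$ and edges $e_1,\ldots,e_{n-1}$, and let $M$ be its $n\times(n-1)$ vertex-edge incidence matrix. Define the $(n-1)\times n$ matrix $H=[h_{i,j}]$ (rows indexed by edges, columns by vertices) by $$h_{i,j}=\frac{(-1)^{d(e_i,j)}}{n}\begin{cases}|G_T(e_i)| & \text{if } j\in G_H(e_i),\\ |G_H(e_i)| & \text{if } j\in G_T(e_i).\end{cases}$$ Then $HM=I_{n-1}$.
   Context: Each edge is written $e_i=\{l_i,m_i\}$ with $l_i<m_i$. The incidence matrix $M$ has $(i,j)$-entry $1$ if vertex $i$ is incident with edge $e_j$ and $0$ otherwise. $d(u,v)$ denotes the usual graph distance between vertices; for a vertex $j$ and edge $e_i=\{l_i,m_i\}$, $d(j,e_i)=d(e_i,j):=\min\{d(j,l_i),d(j,m_i)\}$. The head component $G_H(e_i)$ is the connected component of $G\setminus e_i$ containing $m_i$; the tail component $G_T(e_i)$ is the component of $G\setminus e_i$ containing $l_i$. $|X|$ denotes the number of vertices of a graph $X$. *)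

theory Defs
  imports Complex_Main
begin

definition adj :: "nat set set \<Rightarrow> nat \<Rightarrow> nat \<Rightarrow> bool" where
  "adj E u v \<longleftrightarrow> {u, v} \<in> E \<and> u \<noteq> v"

definition walk :: "nat set \<Rightarrow> nat set set \<Rightarrow> nat list \<Rightarrow> bool" where
  "walk V E xs \<longleftrightarrow> xs \<noteq> [] \<and> set xs \<subseteq> V \<and>
     (\<forall>i. Suc i < length xs \<longrightarrow> adj E (xs ! i) (xs ! Suc i))"

definition reachable :: "nat set \<Rightarrow> nat set set \<Rightarrow> nat \<Rightarrow> nat \<Rightarrow> bool" where
  "reachable V E u v \<longleftrightarrow> (\<exists>xs. walk V E xs \<and> hd xs = u \<and> last xs = v)"

definition connected_graph :: "nat set \<Rightarrow> nat set set \<Rightarrow> bool" where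
  "connected_graph V E \<longleftrightarrow> (\<forall>u\<in>V. \<forall>v\<in>V. reachable V E u v)"

definition has_cycle :: "nat set \<Rightarrow> nat set set \<Rightarrow> bool" where
  "has_cycle V E \<longleftrightarrow> (\<exists>xs. walk V E xs \<and> distinct xs \<and> length xs \<ge> 3 \<and> adj E (last xs) (hd xs))"

definition is_tree :: "nat set \<Rightarrow> nat set set \<Rightarrow> bool" where
  "is_tree V E \<longleftrightarrow> V \<noteq> {} \<and> (\<forall>e\<in>E. \<exists>u v. e = {u, v} \<and> u \<noteq> v \<and> u \<in> V \<and> v \<in> V)
     \<and> connected_graph V E \<and> \<not> has_cycle V E"

definition gdist :: "nat set \<Rightarrow> nat set set \<Rightarrow> nat \<Rightarrow> nat \<Rightarrow> nat" where
  "gdist V E u v = (LEAST k. \<exists>xs. walk V E xs \<and> hd xs = u \<and> last xs = v \<and> length xs = Suc k)"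

definition component :: "nat set \<Rightarrow> nat set set \<Rightarrow> nat \<Rightarrow> nat set" where
  "component V E u = {v \<in> V. reachable V E u v}"

definition tree_edges :: "nat \<Rightarrow> (nat \<Rightarrow> nat) \<Rightarrow> (nat \<Rightarrow> nat) \<Rightarrow> nat set set" where
  "tree_edges n l m = (\<lambda>i. {l i, m i}) ` {1..n-1}"

definition incidence :: "(nat \<Rightarrow> nat) \<Rightarrow> (nat \<Rightarrow> nat) \<Rightarrow> nat \<Rightarrow> nat \<Rightarrow> real" where
  "incidence l m j k = (if j = l k \<or> j = m k then 1 else 0)"

definition head_comp :: "nat \<Rightarrow> (nat \<Rightarrow> nat) \<Rightarrow> (nat \<Rightarrow> nat) \<Rightarrow> nat \<Rightarrow> nat set" where
  "head_comp n l m i = component {1..n} (tree_edges n l m - {{l i, m i}}) (m i)"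

definition tail_comp :: "nat \<Rightarrow> (nat \<Rightarrow> nat) \<Rightarrow> (nat \<Rightarrow> nat) \<Rightarrow> nat \<Rightarrow> nat set" where
  "tail_comp n l m i = component {1..n} (tree_edges n l m - {{l i, m i}}) (l i)"

definition vedist :: "nat \<Rightarrow> (nat \<Rightarrow> nat) \<Rightarrow> (nat \<Rightarrow> nat) \<Rightarrow> nat \<Rightarrow> nat \<Rightarrow> nat" where
  "vedist n l m j i = min (gdist {1..n} (tree_edges n l m) j (l i)) (gdist {1..n} (tree_edges n l m) j (m i))"

definition Hmat :: "nat \<Rightarrow> (nat \<Rightarrow> nat) \<Rightarrow> (nat \<Rightarrow> nat) \<Rightarrow> nat \<Rightarrow> nat \<Rightarrow> real" where
  "Hmat n l m i j = (-1) ^ vedist n l m j i / real n *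
     (if j \<in> head_comp n l m i then real (card (tail_comp n l m i))
      else if j \<in> tail_comp n l m i then real (card (head_comp n l m i)) else 0)"

end

theory Submission
  imports Defs
begin

(* Column k of M has its two ones at the endpoints of e_k, so (HM)_{ik} = h_{i,l_k} + h_{i,m_k}.
   Deleting e_i splits the tree into G_T(e_i) and G_H(e_i); on each side the nearer endpoint of
   e_i is the one on that side, the other being exactly one step further.  For k = i the two
   entries are |G_H|/n and |G_T|/n, which add up to 1.  For k other than i the edge e_k lies
   inside one side, so both entries carry the same factor, and in a tree the distances from the
   two ends of e_k to a fixed vertex differ by one: the signs cancel. *)

lemma walk_Nil [simp]: "\<not> walk V E []"
  by (simp add: walk_def)

lemma walk_Cons:
  "walk V E (x # xs) \<longleftrightarrow> x \<in> V \<and> (xs = [] \<or> adj E x (hd xs) \<and> walk V E xs)"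
  unfolding walk_def by (cases xs) (auto simp: nth_Cons split: nat.splits)

lemma walk_singleton [simp]: "walk V E [x] \<longleftrightarrow> x \<in> V"
  by (simp add: walk_Cons)

lemma walk_hd_in_vertices: "walk V E xs \<Longrightarrow> hd xs \<in> V"
  by (cases xs) (auto simp: walk_Cons)

lemma walk_Cons_Cons [simp]:
  "walk V E (x # y # xs) \<longleftrightarrow> x \<in> V \<and> adj E x y \<and> walk V E (y # xs)"
  by (simp add: walk_Cons[of V E x])

lemma walk_append_iff:
  assumes "xs \<noteq> []" "ys \<noteq> []"
  shows "walk V E (xs @ ys) \<longleftrightarrow> walk V E xs \<and> adj E (last xs) (hd ys) \<and> walk V E ys"
  using assms by (induction xs rule: list_nonempty_induct) (auto simp: walk_Cons)

lemma walk_snoc: "walk V E xs \<Longrightarrow> adj E (last xs) y \<Longrightarrow> y \<in> V \<Longrightarrow> walk V E (xs @ [y])"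
  by (subst walk_append_iff) auto

lemma adj_commute: "adj E u v \<longleftrightarrow> adj E v u"
  by (auto simp: adj_def insert_commute)

lemma walk_rev: "walk V E xs \<Longrightarrow> walk V E (rev xs)"
proof (induction xs)
  case (Cons x xs)
  then show ?case
    using walk_snoc[of V E "rev xs" x] by (cases xs) (auto simp: walk_Cons last_rev adj_commute)
qed simp

lemma walk_mono: "walk V E' xs \<Longrightarrow> E' \<subseteq> E \<Longrightarrow> walk V E xs"
  by (auto simp: walk_def adj_def)

lemma walk_shortcut_to_distinct:
  "walk V E xs \<Longrightarrow> \<exists>ys. walk V E ys \<and> distinct ys \<and> hd ys = hd xs \<and> last ys = last xs"
proof (induction "length xs" arbitrary: xs rule: less_induct)
  case less
  show ?case
  proof (cases "distinct xs")
    case False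
    then obtain p y q r where xs: "xs = p @ [y] @ q @ [y] @ r"
      using not_distinct_decomp by blast
    have "walk V E (p @ [y])"
      using less.prems walk_append_iff[of "p @ [y]" "q @ y # r"] by (simp add: xs)
    moreover have "walk V E (y # r)"
      using less.prems walk_append_iff[of "p @ y # q" "y # r"] by (simp add: xs)
    ultimately have "walk V E (p @ y # r)"
      using walk_append_iff[of "p @ [y]" r] by (cases r) auto
    moreover have "length (p @ y # r) < length xs" "hd (p @ y # r) = hd xs" "last (p @ y # r) = last xs"
      by (cases p; simp add: xs)+
    ultimately show ?thesis
      using less.hyps by metis
  qed (use less.prems in blast)
qed

lemma self_in_component: "u \<in> V \<Longrightarrow> u \<in> component V E u"
  unfolding component_def reachable_def by (auto intro: exI[of _ "[u]"])

lemma component_adj_closed: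
  assumes v: "v \<in> component V E u" and vw: "adj E v w" and w: "w \<in> V"
  shows "w \<in> component V E u"
proof -
  obtain xs where xs: "walk V E xs" "hd xs = u" "last xs = v"
    using v unfolding component_def reachable_def by blast
  then have "walk V E (xs @ [w])" "hd (xs @ [w]) = u"
    using walk_snoc[OF xs(1)] vw w by (auto simp: hd_append)
  then show ?thesis
    using w unfolding component_def reachable_def by force
qed

lemma walk_in_adj_closed_set:
  assumes closed: "\<And>v w. v \<in> S \<Longrightarrow> adj E v w \<Longrightarrow> w \<in> V \<Longrightarrow> w \<in> S"
  shows "walk V E xs \<Longrightarrow> hd xs \<in> S \<Longrightarrow> last xs \<in> S"
proof (induction xs)
  case (Cons x xs)
  then show ?case
    using closed[of x "hd xs"] walk_hd_in_vertices[of V E xs] by (auto simp: walk_Cons)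
qed simp

lemma gdist_le_walk:
  "walk V E xs \<Longrightarrow> hd xs = u \<Longrightarrow> last xs = v \<Longrightarrow> gdist V E u v \<le> length xs - 1"
  unfolding gdist_def by (rule Least_le) (cases xs, auto)

lemma gdist_shortest_walk:
  assumes "reachable V E u v"
  obtains xs where "walk V E xs" "hd xs = u" "last xs = v" "length xs = Suc (gdist V E u v)"
proof -
  from assms obtain xs where "walk V E xs" "hd xs = u" "last xs = v"
    unfolding reachable_def by blast
  then have "\<exists>k xs. walk V E xs \<and> hd xs = u \<and> last xs = v \<and> length xs = Suc k"
    by (intro exI[of _ "length xs - 1"] exI[of _ xs]) (cases xs, auto)
  from LeastI_ex[OF this] show ?thesis
    using that unfolding gdist_def by blast
qed

lemma gdist_self: "u \<in> V \<Longrightarrow> gdist V E u u = 0"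
  using gdist_le_walk[of V E "[u]" u u] by simp

lemma gdist_commute:
  assumes "connected_graph V E" "u \<in> V" "v \<in> V"
  shows "gdist V E u v = gdist V E v u"
proof -
  have le: "gdist V E u v \<le> gdist V E v u" if "u \<in> V" "v \<in> V" for u v
  proof -
    have "reachable V E v u"
      using assms(1) that unfolding connected_graph_def by blast
    then obtain xs where "walk V E xs" "hd xs = v" "last xs = u" "length xs = Suc (gdist V E v u)"
      by (rule gdist_shortest_walk)
    then show ?thesis
      using gdist_le_walk[of V E "rev xs" u v] walk_rev[of V E xs] by (simp add: hd_rev last_rev)
  qed
  show ?thesis
    using le[of u v] le[of v u] assms by simp
qed

(* For e_i = {l_i, m_i}: G_T(e_i) = edge_side V E (l i) (m i), G_H(e_i) = edge_side V E (m i) (l i). *)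
abbreviation edge_side :: "nat set \<Rightarrow> nat set set \<Rightarrow> nat \<Rightarrow> nat \<Rightarrow> nat set" where
  "edge_side V E a b \<equiv> component V (E - {{a, b}}) a"

lemma edge_side_swap: "component V (E - {{b, a}}) x = component V (E - {{a, b}}) x"
  by (simp add: insert_commute)

lemma edge_sides_cover:
  assumes conn: "connected_graph V E" and ab: "{a, b} \<in> E" "a \<in> V" "b \<in> V" and x: "x \<in> V"
  shows "x \<in> edge_side V E a b \<union> edge_side V E b a"
proof -
  let ?S = "edge_side V E a b \<union> edge_side V E b a"
  have closed: "w \<in> ?S" if "v \<in> ?S" "adj E v w" "w \<in> V" for v w
  proof (cases "{v, w} = {a, b}")
    case True
    then have "w = a \<or> w = b"
      by (metis doubleton_eq_iff)
    then show ?thesis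
      using ab self_in_component by blast
  next
    case False
    then have "adj (E - {{a, b}}) v w"
      using that(2) by (auto simp: adj_def)
    moreover have "v \<in> component V (E - {{a, b}}) a \<union> component V (E - {{a, b}}) b"
      using that(1) by (simp add: edge_side_swap)
    ultimately show ?thesis
      using component_adj_closed that(3) by (auto simp: edge_side_swap)
  qed
  obtain xs where "walk V E xs" "hd xs = a" "last xs = x"
    using conn ab x unfolding connected_graph_def reachable_def by blast
  then show ?thesis
    using walk_in_adj_closed_set[of ?S E V xs] closed self_in_component[OF ab(2)] by blast
qed

lemma tree_edge_side_excludes_other_end:
  assumes tree: "is_tree V E" and ab: "{a, b} \<in> E" "a \<noteq> b"
  shows "b \<notin> edge_side V E a b"
proof
  assume "b \<in> edge_side V E a b"
  then obtain xs where "walk V (E - {{a, b}}) xs" "hd xs = a" "last xs = b"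
    unfolding component_def reachable_def by blast
  then obtain ys where ys: "walk V (E - {{a, b}}) ys" "distinct ys" "hd ys = a" "last ys = b"
    using walk_shortcut_to_distinct by metis
  obtain x y zs where ys_split: "ys = x # y # zs"
    using ys ab by (cases ys rule: remdups_adj.cases) auto
  then have "zs \<noteq> []"
    using ys by (auto simp: adj_def)
  then have "length ys \<ge> 3"
    using ys_split by (cases zs) auto
  moreover have "walk V E ys" "adj E (last ys) (hd ys)"
    using walk_mono[OF ys(1)] ys ab by (auto simp: adj_def insert_commute)
  ultimately have "has_cycle V E"
    unfolding has_cycle_def using ys(2) by blast
  then show False
    using tree unfolding is_tree_def by blast
qed

lemma walk_leaving_edge_side:
  assumes "a \<in> V"
  shows "walk V E xs \<Longrightarrow> hd xs \<in> edge_side V E a b \<Longrightarrow> last xs \<notin> edge_side V E a b \<Longrightarrow>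
    \<exists>ys. walk V E ys \<and> hd ys = hd xs \<and> last ys = a \<and> length ys < length xs"
proof (induction xs)
  case (Cons x xs)
  then obtain y ys where xs: "xs = y # ys"
    by (cases xs) auto
  have step: "adj E x y" "walk V E xs" "y \<in> V"
    using Cons.prems(1) walk_hd_in_vertices[of V E xs] by (auto simp: xs)
  show ?case
  proof (cases "y \<in> edge_side V E a b")
    case True
    then obtain zs where "walk V E zs" "hd zs = y" "last zs = a" "length zs < length xs"
      using Cons.IH Cons.prems step by (auto simp: xs)
    then show ?thesis
      using Cons.prems step by (intro exI[of _ "x # zs"]) (auto simp: walk_Cons)
  next
    case False
    then have "\<not> adj (E - {{a, b}}) x y"
      using Cons.prems(2) step(3) component_adj_closed by fastforce
    moreover have "y \<noteq> a"
      using False assms self_in_component by blast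
    ultimately have "x = a"
      using step(1) by (auto simp: adj_def doubleton_eq_iff)
    then show ?thesis
      using assms by (intro exI[of _ "[a]"]) (auto simp: xs)
  qed
qed simp

lemma gdist_edge_side:
  assumes tree: "is_tree V E" and ab: "{a, b} \<in> E" "a \<noteq> b" "a \<in> V" "b \<in> V"
    and x: "x \<in> edge_side V E a b"
  shows "gdist V E x b = Suc (gdist V E x a)"
proof -
  have reach: "reachable V E x y" if "y \<in> V" for y
    using tree x that unfolding is_tree_def connected_graph_def component_def by blast
  obtain xs where xs: "walk V E xs" "hd xs = x" "last xs = a" "length xs = Suc (gdist V E x a)"
    using gdist_shortest_walk[OF reach[OF ab(3)]] by blast
  have "walk V E (xs @ [b])"
    using walk_snoc[OF xs(1)] xs(3) ab by (simp add: adj_def)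
  then have "gdist V E x b \<le> Suc (gdist V E x a)"
    using gdist_le_walk[of V E "xs @ [b]" x b] xs by (cases xs) auto
  moreover obtain ys where ys: "walk V E ys" "hd ys = x" "last ys = b" "length ys = Suc (gdist V E x b)"
    using gdist_shortest_walk[OF reach[OF ab(4)]] by blast
  then obtain zs where "walk V E zs" "hd zs = x" "last zs = a" "length zs < length ys"
    using walk_leaving_edge_side[OF ab(3) ys(1)] tree_edge_side_excludes_other_end[OF tree ab(1,2)] x
    by auto
  then have "gdist V E x a < gdist V E x b"
    using gdist_le_walk[of V E zs x a] ys(4) by (cases zs) auto
  ultimately show ?thesis
    by simp
qed

lemma tree_edge_sides_disjoint:
  assumes "is_tree V E" "{a, b} \<in> E" "a \<noteq> b" "a \<in> V" "b \<in> V"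
  shows "edge_side V E a b \<inter> edge_side V E b a = {}"
  using gdist_edge_side[OF assms] gdist_edge_side[of V E b a] assms
  by (fastforce simp: insert_commute)

lemma card_tree_edge_sides:
  assumes "finite V" "is_tree V E" "{a, b} \<in> E" "a \<noteq> b" "a \<in> V" "b \<in> V"
  shows "card (edge_side V E a b) + card (edge_side V E b a) = card V"
proof -
  have "edge_side V E a b \<union> edge_side V E b a = V"
    using edge_sides_cover[of V E a b] assms unfolding is_tree_def component_def by blast
  then show ?thesis
    using card_Un_disjoint tree_edge_sides_disjoint[OF assms(2-)] assms(1)
    by (metis finite_Un)
qed

lemma tree_adj_gdist_parity:
  assumes tree: "is_tree V E" and uv: "{u, v} \<in> E" "u \<noteq> v" "u \<in> V" "v \<in> V" and c: "c \<in> V"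
  shows "(-1::real) ^ gdist V E u c + (-1) ^ gdist V E v c = 0"
proof -
  have conn: "connected_graph V E"
    using tree unfolding is_tree_def by blast
  have "gdist V E c v = Suc (gdist V E c u) \<or> gdist V E c u = Suc (gdist V E c v)"
    using edge_sides_cover[OF conn uv(1,3,4) c] gdist_edge_side[OF tree uv]
      gdist_edge_side[of V E v u c] tree uv by (auto simp: insert_commute)
  then show ?thesis
    using gdist_commute[OF conn] uv c by auto
qed

lemma sum_incidence:
  assumes "finite A" "l k \<in> A" "m k \<in> A" "l k \<noteq> m k"
  shows "(\<Sum>j\<in>A. f j * incidence l m j k) = f (l k) + f (m k)"
proof -
  have "(\<Sum>j\<in>A. f j * incidence l m j k) = (\<Sum>j\<in>{l k, m k}. f j)"
    using assms by (intro sum.mono_neutral_cong_right) (auto simp: incidence_def)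
  then show ?thesis
    using assms(4) by simp
qed

locale labelled_tree =
  fixes n :: nat and l m :: "nat \<Rightarrow> nat"
  assumes lm: "\<forall>i\<in>{1..n-1}. l i < m i \<and> l i \<in> {1..n} \<and> m i \<in> {1..n}"
    and distinct_edges: "inj_on (\<lambda>i. {l i, m i}) {1..n-1}"
    and tree: "is_tree {1..n} (tree_edges n l m)"
begin

abbreviation tdist :: "nat \<Rightarrow> nat \<Rightarrow> nat" where
  "tdist \<equiv> gdist {1..n} (tree_edges n l m)"

abbreviation side :: "nat \<Rightarrow> nat \<Rightarrow> nat set" where
  "side \<equiv> edge_side {1..n} (tree_edges n l m)"

lemma tree_edge:
  assumes "i \<in> {1..n-1}"
  shows "{l i, m i} \<in> tree_edges n l m" "l i \<noteq> m i" "l i \<in> {1..n}" "m i \<in> {1..n}"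
  using assms lm by (fastforce simp: tree_edges_def)+

lemma Hmat_on_side:
  assumes i: "i \<in> {1..n-1}" and ab: "{a, b} = {l i, m i}" and x: "x \<in> side a b"
  shows "Hmat n l m i x = (-1) ^ tdist x a / n * card (side b a)"
proof -
  have ab': "{a, b} \<in> tree_edges n l m" "a \<noteq> b" "a \<in> {1..n}" "b \<in> {1..n}"
    using tree_edge[OF i] ab by (auto simp: doubleton_eq_iff insert_commute)
  have "vedist n l m x i = tdist x a"
    using gdist_edge_side[OF tree ab' x] ab by (auto simp: vedist_def doubleton_eq_iff)
  moreover have "tail_comp n l m i = side (l i) (m i)" "head_comp n l m i = side (m i) (l i)"
    by (simp_all add: tail_comp_def head_comp_def insert_commute)
  moreover have "x \<notin> side b a"
    using tree_edge_sides_disjoint[OF tree ab'] x by blast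
  ultimately show ?thesis
    using ab x by (auto simp: Hmat_def doubleton_eq_iff)
qed

lemma Hmat_diagonal:
  assumes i: "i \<in> {1..n-1}"
  shows "Hmat n l m i (l i) + Hmat n l m i (m i) = 1"
proof -
  have "Hmat n l m i (l i) + Hmat n l m i (m i)
      = (card (side (m i) (l i)) + card (side (l i) (m i))) / n"
    using Hmat_on_side[OF i, of "l i" "m i" "l i"] Hmat_on_side[OF i, of "m i" "l i" "m i"]
      tree_edge[OF i] by (simp add: self_in_component gdist_self insert_commute add_divide_distrib)
  also have "\<dots> = 1"
    using card_tree_edge_sides[OF _ tree tree_edge[OF i]] i by auto
  finally show ?thesis .
qed

lemma Hmat_off_diagonal:
  assumes i: "i \<in> {1..n-1}" and k: "k \<in> {1..n-1}" and "i \<noteq> k"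
  shows "Hmat n l m i (l k) + Hmat n l m i (m k) = 0"
proof -
  note ei = tree_edge[OF i] and ek = tree_edge[OF k]
  have "{l k, m k} \<noteq> {l i, m i}"
    using inj_onD[OF distinct_edges _ k i] \<open>i \<noteq> k\<close> by blast
  then have adj_k: "adj (tree_edges n l m - {{l i, m i}}) (l k) (m k)"
    using ek by (simp add: adj_def)
  have "l k \<in> side (l i) (m i) \<union> side (m i) (l i)"
    using edge_sides_cover[OF _ ei(1,3,4) ek(3)] tree unfolding is_tree_def by blast
  moreover have "{m i, l i} = {l i, m i}"
    by (rule insert_commute)
  ultimately obtain a b where ab: "{a, b} = {l i, m i}" and lk: "l k \<in> side a b"
    by blast
  have mk: "m k \<in> side a b"
    using component_adj_closed[OF lk _ ek(4)] adj_k ab by (simp add: edge_side_swap)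
  have "Hmat n l m i (l k) + Hmat n l m i (m k)
      = ((-1) ^ tdist (l k) a + (-1) ^ tdist (m k) a) / n * card (side b a)"
    using Hmat_on_side[OF i ab lk] Hmat_on_side[OF i ab mk]
    by (simp add: add_divide_distrib distrib_right)
  also have "\<dots> = 0"
    using tree_adj_gdist_parity[OF tree ek] ab ei by (auto simp: doubleton_eq_iff)
  finally show ?thesis .
qed

end

theorem mainTheorem1:
  fixes n :: nat and l m :: "nat \<Rightarrow> nat"
  assumes lm: "\<forall>i\<in>{1..n-1}. l i < m i \<and> l i \<in> {1..n} \<and> m i \<in> {1..n}"
    and distinct_edges: "inj_on (\<lambda>i. {l i, m i}) {1..n-1}"
    and tree: "is_tree {1..n} (tree_edges n l m)"
  shows "\<forall>i\<in>{1..n-1}. \<forall>k\<in>{1..n-1}.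
           (\<Sum>j=1..n. Hmat n l m i j * incidence l m j k) = (if i = k then 1 else 0)"
proof (intro ballI)
  fix i k assume i: "i \<in> {1..n-1}" and k: "k \<in> {1..n-1}"
  interpret labelled_tree n l m
    using lm distinct_edges tree by (rule labelled_tree.intro)
  have "(\<Sum>j=1..n. Hmat n l m i j * incidence l m j k)
      = Hmat n l m i (l k) + Hmat n l m i (m k)"
    using sum_incidence[of "{1..n}"] tree_edge(2-4)[OF k] by simp
  then show "(\<Sum>j=1..n. Hmat n l m i j * incidence l m j k) = (if i = k then 1 else 0)"
    using Hmat_diagonal[OF i] Hmat_off_diagonal[OF i k] by (cases "i = k") simp_all
qed

end
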